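(* Let $\mathbf C$ be an admissible category of frames, or an admissible category of coframes. Then $\mathbf{Conv}$ is a coreflective subcategory of $(\mathbf C^{\mathrm{conv}})^{op}$ through the coreflection $\mathrm{pt}$: the functor $\mathbb P:\mathbf{Conv}\to(\mathbf C^{\mathrm{conv}})^{op}$ is fully faithful and has right adjoint $\mathrm{pt}$.
   Context: An inf-semilattice is a poset with all finite infima. A filter on an inf-semilattice $L$ is a non-empty upward-closed subset closed under binary meets ($L$ itself is allowed). $\mathbb F L$ is the set of filters on $L$ ordered by inclusion. $\mathbb P(X)$ is the powerset of a set $X$. A category of frames (resp. coframes) has frames (resp. coframes) as objects and frame (resp. coframe) morphisms as morphisms; a coframe is a complete lattice where arbitrary infima distribute over binary suprema, and coframe morphisms preserve all infima and finite suprema. Such a category $\mathbf C$ is admissible if $\mathbb P(X)$ is a $\mathbf C$-object for every set $X$ and there are classes of index sets $\mathcal I,\mathcal J$ such that the $\mathbf C$-morphisms $L\to L'$ are exactly the monotone maps preserving all existing $I$-indexed infima ($I\in\mathcal I$) and $J$-indexed suprema ($J\in\mathcal J$). A convergence $\mathbf C$-object is a $\mathbf C$-object $L$ with a monotone map $\lim_L:\mathbb F L\to L$; $\mathbf C^{\mathrm{conv}}$ has as morphisms $\varphi:L\to L'$ the $\mathbf C$-morphisms with $\lim_{L'}\mathcal F\le\varphi(\lim_L\varphi^{-1}(\mathcal F))$ for all $\mathcal F\in\mathbb F L'$. A convergence space is a set $X$ with a relation $\to$ between filters of subsets of $X$ and points, such that $\{S: x\in S\}\to x$ and $\mathcal F\to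 x$, $\mathcal F\subseteq\mathcal G$ imply $\mathcal G\to x$; continuous maps $f$ satisfy $\mathcal F\to x\Rightarrow f[\mathcal F]\to f(x)$ with $f[\mathcal F]=\{B: f^{-1}(B)\in\mathcal F\}$; category $\mathbf{Conv}$. $\mathbb P(X)$ carries $\lim\mathcal F=\{x:\mathcal F\to x\}$, $\mathbb P(f)=f^{-1}$. With $\mathbb P(1)=\{\emptyset,\{*\}\}$ and $\lim_{\mathbb P(1)}$ constantly $\{*\}$, $\mathrm{pt}\,L$ is the set of morphisms $L\to\mathbb P(1)$ in $\mathbf C^{\mathrm{conv}}$, with $\ell^\bullet=\{\varphi:\varphi(\ell)=\{*\}\}$, $\mathcal F^\circ=\{\ell:\ell^\bullet\in\mathcal F\}$, and convergence $\mathcal F\to\varphi$ iff $\varphi\in(\lim_L\mathcal F^\circ)^\bullet$; $\mathrm{pt}\,\varphi(\psi)=\psi\circ\varphi$. *)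

theory Defs
  imports Main "HOL-Algebra.Complete_Lattice"
begin

definition is_frame :: "('a, 'c) gorder_scheme \<Rightarrow> bool" where
  "is_frame L \<equiv> complete_lattice L \<and>
     (\<forall>a\<in>carrier L. \<forall>S. S \<subseteq> carrier L \<longrightarrow>
        a \<sqinter>\<^bsub>L\<^esub> (\<Squnion>\<^bsub>L\<^esub> S) = \<Squnion>\<^bsub>L\<^esub> ((\<lambda>s. a \<sqinter>\<^bsub>L\<^esub> s) ` S))"

definition is_coframe :: "('a, 'c) gorder_scheme \<Rightarrow> bool" where
  "is_coframe L \<equiv> complete_lattice L \<and>
     (\<forall>a\<in>carrier L. \<forall>S. S \<subseteq> carrier L \<longrightarrow>
        a \<squnion>\<^bsub>L\<^esub> (\<Sqinter>\<^bsub>L\<^esub> S) = \<Sqinter>\<^bsub>L\<^esub> ((\<lambda>s. a \<squnion>\<^bsub>L\<^esub> s) ` S))"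

definition C_obj :: "bool \<Rightarrow> ('a, 'c) gorder_scheme \<Rightarrow> bool" where
  "C_obj fr L \<equiv> (if fr then is_frame L else is_coframe L)"

definition PowL :: "'x set \<Rightarrow> 'x set gorder" where
  "PowL X = \<lparr>carrier = Pow X, eq = (=), le = (\<subseteq>)\<rparr>"

definition frame_hom :: "('a, 'c) gorder_scheme \<Rightarrow> ('b, 'd) gorder_scheme \<Rightarrow> ('a \<Rightarrow> 'b) \<Rightarrow> bool" where
  "frame_hom L L' \<phi> \<equiv> \<phi> (\<Sqinter>\<^bsub>L\<^esub> {}) = \<Sqinter>\<^bsub>L'\<^esub> {} \<and>
     (\<forall>x\<in>carrier L. \<forall>y\<in>carrier L. \<phi> (x \<sqinter>\<^bsub>L\<^esub> y) = \<phi> x \<sqinter>\<^bsub>L'\<^esub> \<phi> y) \<and>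
     (\<forall>S. S \<subseteq> carrier L \<longrightarrow> \<phi> (\<Squnion>\<^bsub>L\<^esub> S) = \<Squnion>\<^bsub>L'\<^esub> (\<phi> ` S))"

definition coframe_hom :: "('a, 'c) gorder_scheme \<Rightarrow> ('b, 'd) gorder_scheme \<Rightarrow> ('a \<Rightarrow> 'b) \<Rightarrow> bool" where
  "coframe_hom L L' \<phi> \<equiv> \<phi> (\<Squnion>\<^bsub>L\<^esub> {}) = \<Squnion>\<^bsub>L'\<^esub> {} \<and>
     (\<forall>x\<in>carrier L. \<forall>y\<in>carrier L. \<phi> (x \<squnion>\<^bsub>L\<^esub> y) = \<phi> x \<squnion>\<^bsub>L'\<^esub> \<phi> y) \<and>
     (\<forall>S. S \<subseteq> carrier L \<longrightarrow> \<phi> (\<Sqinter>\<^bsub>L\<^esub> S) = \<Sqinter>\<^bsub>L'\<^esub> (\<phi> ` S))"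

definition C_hom :: "bool \<Rightarrow> 'i set set \<Rightarrow> 'j set set \<Rightarrow> ('a, 'c) gorder_scheme \<Rightarrow> ('b, 'd) gorder_scheme
    \<Rightarrow> ('a \<Rightarrow> 'b) \<Rightarrow> bool" where
  "C_hom fr II JJ L L' \<phi> \<equiv>
     \<phi> \<in> carrier L \<rightarrow>\<^sub>E carrier L' \<and>
     (if fr then frame_hom L L' \<phi> else coframe_hom L L' \<phi>) \<and>
     (\<forall>x\<in>carrier L. \<forall>y\<in>carrier L. x \<sqsubseteq>\<^bsub>L\<^esub> y \<longrightarrow> \<phi> x \<sqsubseteq>\<^bsub>L'\<^esub> \<phi> y) \<and>
     (\<forall>I\<in>II. \<forall>f\<in>I \<rightarrow> carrier L. \<phi> (infi L I f) = infi L' I (\<phi> \<circ> f)) \<and>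
     (\<forall>J\<in>JJ. \<forall>f\<in>J \<rightarrow> carrier L. \<phi> (supr L J f) = supr L' J (\<phi> \<circ> f))"

definition lat_filter :: "('a, 'c) gorder_scheme \<Rightarrow> 'a set \<Rightarrow> bool" where
  "lat_filter L F \<equiv> F \<subseteq> carrier L \<and> F \<noteq> {} \<and>
     (\<forall>x\<in>F. \<forall>y\<in>carrier L. x \<sqsubseteq>\<^bsub>L\<^esub> y \<longrightarrow> y \<in> F) \<and>
     (\<forall>x\<in>F. \<forall>y\<in>F. x \<sqinter>\<^bsub>L\<^esub> y \<in> F)"

definition conv_lim :: "('a, 'c) gorder_scheme \<Rightarrow> ('a set \<Rightarrow> 'a) \<Rightarrow> bool" where
  "conv_lim L lim \<equiv> (\<forall>F. lat_filter L F \<longrightarrow> lim F \<in> carrier L) \<and>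
     (\<forall>F G. lat_filter L F \<and> lat_filter L G \<and> F \<subseteq> G \<longrightarrow> lim F \<sqsubseteq>\<^bsub>L\<^esub> lim G)"

definition Cconv_hom :: "bool \<Rightarrow> 'i set set \<Rightarrow> 'j set set \<Rightarrow> ('a, 'c) gorder_scheme \<Rightarrow> ('a set \<Rightarrow> 'a)
    \<Rightarrow> ('b, 'd) gorder_scheme \<Rightarrow> ('b set \<Rightarrow> 'b) \<Rightarrow> ('a \<Rightarrow> 'b) \<Rightarrow> bool" where
  "Cconv_hom fr II JJ L lim L' lim' \<phi> \<equiv> C_hom fr II JJ L L' \<phi> \<and>
     (\<forall>F. lat_filter L' F \<longrightarrow> lim' F \<sqsubseteq>\<^bsub>L'\<^esub> \<phi> (lim {l \<in> carrier L. \<phi> l \<in> F}))"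

abbreviation set_filter :: "'x set \<Rightarrow> 'x set set \<Rightarrow> bool" where
  "set_filter X F \<equiv> lat_filter (PowL X) F"

definition conv_space :: "'x set \<Rightarrow> ('x set set \<Rightarrow> 'x \<Rightarrow> bool) \<Rightarrow> bool" where
  "conv_space X cv \<equiv> (\<forall>F x. cv F x \<longrightarrow> set_filter X F \<and> x \<in> X) \<and>
     (\<forall>x\<in>X. cv {S. S \<subseteq> X \<and> x \<in> S} x) \<and>
     (\<forall>F G x. cv F x \<and> set_filter X G \<and> F \<subseteq> G \<longrightarrow> cv G x)"

definition img_filter :: "'x set \<Rightarrow> 'y set \<Rightarrow> ('x \<Rightarrow> 'y) \<Rightarrow> 'x set set \<Rightarrow> 'y set set" where
  "img_filter X Y f F = {B. B \<subseteq> Y \<and> {x \<in> X. f x \<in> B} \<in> F}"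

definition continuous_conv :: "'x set \<Rightarrow> ('x set set \<Rightarrow> 'x \<Rightarrow> bool) \<Rightarrow> 'y set
    \<Rightarrow> ('y set set \<Rightarrow> 'y \<Rightarrow> bool) \<Rightarrow> ('x \<Rightarrow> 'y) \<Rightarrow> bool" where
  "continuous_conv X cv Y cv' f \<equiv> f \<in> X \<rightarrow>\<^sub>E Y \<and>
     (\<forall>F x. cv F x \<longrightarrow> cv' (img_filter X Y f F) (f x))"

definition pow_lim :: "'x set \<Rightarrow> ('x set set \<Rightarrow> 'x \<Rightarrow> bool) \<Rightarrow> 'x set set \<Rightarrow> 'x set" where
  "pow_lim X cv F = {x \<in> X. cv F x}"

definition pow_map :: "'x set \<Rightarrow> 'y set \<Rightarrow> ('x \<Rightarrow> 'y) \<Rightarrow> 'y set \<Rightarrow> 'x set" where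
  "pow_map X Y f = (\<lambda>B\<in>Pow Y. {x \<in> X. f x \<in> B})"

abbreviation one_lim :: "unit set set \<Rightarrow> unit set" where
  "one_lim F \<equiv> UNIV"

definition pt :: "bool \<Rightarrow> 'i set set \<Rightarrow> 'j set set \<Rightarrow> ('a, 'c) gorder_scheme \<Rightarrow> ('a set \<Rightarrow> 'a)
    \<Rightarrow> ('a \<Rightarrow> unit set) set" where
  "pt fr II JJ L lim = {\<psi>. Cconv_hom fr II JJ L lim (PowL (UNIV :: unit set)) one_lim \<psi>}"

definition bullet :: "bool \<Rightarrow> 'i set set \<Rightarrow> 'j set set \<Rightarrow> ('a, 'c) gorder_scheme \<Rightarrow> ('a set \<Rightarrow> 'a)
    \<Rightarrow> 'a \<Rightarrow> ('a \<Rightarrow> unit set) set" where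
  "bullet fr II JJ L lim l = {\<psi> \<in> pt fr II JJ L lim. \<psi> l = UNIV}"

definition circ :: "bool \<Rightarrow> 'i set set \<Rightarrow> 'j set set \<Rightarrow> ('a, 'c) gorder_scheme \<Rightarrow> ('a set \<Rightarrow> 'a)
    \<Rightarrow> ('a \<Rightarrow> unit set) set set \<Rightarrow> 'a set" where
  "circ fr II JJ L lim F = {l \<in> carrier L. bullet fr II JJ L lim l \<in> F}"

definition pt_conv :: "bool \<Rightarrow> 'i set set \<Rightarrow> 'j set set \<Rightarrow> ('a, 'c) gorder_scheme \<Rightarrow> ('a set \<Rightarrow> 'a)
    \<Rightarrow> ('a \<Rightarrow> unit set) set set \<Rightarrow> ('a \<Rightarrow> unit set) \<Rightarrow> bool" where
  "pt_conv fr II JJ L lim F \<psi> \<equiv> set_filter (pt fr II JJ L lim) F \<and>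
     \<psi> \<in> bullet fr II JJ L lim (lim (circ fr II JJ L lim F))"

definition pt_map :: "bool \<Rightarrow> 'i set set \<Rightarrow> 'j set set \<Rightarrow> ('a, 'c) gorder_scheme \<Rightarrow> ('a set \<Rightarrow> 'a)
    \<Rightarrow> ('b, 'd) gorder_scheme \<Rightarrow> ('b set \<Rightarrow> 'b) \<Rightarrow> ('a \<Rightarrow> 'b)
    \<Rightarrow> ('b \<Rightarrow> unit set) \<Rightarrow> ('a \<Rightarrow> unit set)" where
  "pt_map fr II JJ L lim L' lim' \<phi> = (\<lambda>\<psi>\<in>pt fr II JJ L' lim'. \<lambda>l\<in>carrier L. \<psi> (\<phi> l))"

definition counit :: "bool \<Rightarrow> 'i set set \<Rightarrow> 'j set set \<Rightarrow> ('a, 'c) gorder_scheme \<Rightarrow> ('a set \<Rightarrow> 'a)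
    \<Rightarrow> 'a \<Rightarrow> ('a \<Rightarrow> unit set) set" where
  "counit fr II JJ L lim = (\<lambda>l\<in>carrier L. bullet fr II JJ L lim l)"

end

(*
  In the powerset lattice all operations are computed pointwise, so a map \<phi> : L \<rightarrow> P(X)
  is a C-morphism iff for every x \<in> X the predicate l \<mapsto> x \<in> \<phi> l is a C-morphism from L
  to the two-element lattice P(1), i.e. a point of L.  The points of P(Y) are exactly the
  memberships B \<mapsto> y \<in> B (singletons are completely prime, complements of singletons
  completely coprime), so the C-morphisms P(Y) \<rightarrow> P(X) are exactly the preimage maps of
  functions X \<rightarrow> Y, and the convergence conditions on both sides correspond: P is fully
  faithful.  By the same pointwise criterion l \<mapsto> l\<bullet> is a C-morphism L \<rightarrow> P(pt L), and a
  morphism \<phi> : L \<rightarrow> P(X) factors through it uniquely, via the map sending x to the point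
  l \<mapsto> x \<in> \<phi> l.
*)

theory Submission
  imports Defs
begin

section \<open>The powerset lattice\<close>

lemma carrier_PowL [simp]: "carrier (PowL X) = Pow X"
  and le_PowL [simp]: "a \<sqsubseteq>\<^bsub>PowL X\<^esub> b \<longleftrightarrow> a \<subseteq> b"
  by (simp_all add: PowL_def)

lemma complete_lattice_PowL: "complete_lattice (PowL X)"
  unfolding PowL_def by (rule powerset_is_complete_lattice)

lemma Sup_PowL: "A \<subseteq> Pow X \<Longrightarrow> \<Squnion>\<^bsub>PowL X\<^esub> A = \<Union>A"
proof -
  assume A: "A \<subseteq> Pow X"
  have lub: "least (PowL X) (\<Union>A) (Upper (PowL X) A)"
  proof (rule least_UpperI)
    show "\<Union>A \<sqsubseteq>\<^bsub>PowL X\<^esub> u" if "u \<in> Upper (PowL X) A" for u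
      using that by (auto simp: Upper_def Int_absorb2[OF A])
  qed (use A in auto)
  interpret complete_lattice "PowL X" by (rule complete_lattice_PowL)
  show ?thesis
    by (rule supI[where P = "\<lambda>l. l = \<Union>A"]) (use A lub least_unique in auto)
qed

lemma Inf_PowL: "A \<subseteq> Pow X \<Longrightarrow> \<Sqinter>\<^bsub>PowL X\<^esub> A = X \<inter> \<Inter>A"
proof -
  assume A: "A \<subseteq> Pow X"
  have glb: "greatest (PowL X) (X \<inter> \<Inter>A) (Lower (PowL X) A)"
  proof (rule greatest_LowerI)
    show "u \<sqsubseteq>\<^bsub>PowL X\<^esub> X \<inter> \<Inter>A" if "u \<in> Lower (PowL X) A" for u
      using that by (auto simp: Lower_def Int_absorb2[OF A])
  qed (use A in auto)
  interpret complete_lattice "PowL X" by (rule complete_lattice_PowL)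
  show ?thesis
    by (rule infI[where P = "\<lambda>l. l = X \<inter> \<Inter>A"]) (use A glb greatest_unique in auto)
qed

lemma meet_PowL: "a \<subseteq> X \<Longrightarrow> b \<subseteq> X \<Longrightarrow> a \<sqinter>\<^bsub>PowL X\<^esub> b = a \<inter> b"
  by (auto simp: meet_def Inf_PowL)

lemma join_PowL: "a \<subseteq> X \<Longrightarrow> b \<subseteq> X \<Longrightarrow> a \<squnion>\<^bsub>PowL X\<^esub> b = a \<union> b"
  by (simp add: join_def Sup_PowL)

lemma infi_PowL: "f \<in> I \<rightarrow> Pow X \<Longrightarrow> infi (PowL X) I f = X \<inter> (\<Inter>i\<in>I. f i)"
  unfolding infi_def by (subst Inf_PowL) auto

lemma supr_PowL: "f \<in> I \<rightarrow> Pow X \<Longrightarrow> supr (PowL X) I f = (\<Union>i\<in>I. f i)"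
  unfolding supr_def by (subst Sup_PowL) auto

lemma is_frame_PowL: "is_frame (PowL X)"
  unfolding is_frame_def
proof (intro conjI ballI allI impI complete_lattice_PowL)
  fix a S assume "a \<in> carrier (PowL X)" "S \<subseteq> carrier (PowL X)"
  then have "(\<lambda>s. a \<sqinter>\<^bsub>PowL X\<^esub> s) ` S = (\<lambda>s. a \<inter> s) ` S" "\<Union>S \<subseteq> X"
    by (auto simp: meet_PowL intro!: image_cong)
  with \<open>a \<in> carrier (PowL X)\<close> \<open>S \<subseteq> carrier (PowL X)\<close>
  show "a \<sqinter>\<^bsub>PowL X\<^esub> \<Squnion>\<^bsub>PowL X\<^esub>S = \<Squnion>\<^bsub>PowL X\<^esub>((\<lambda>s. a \<sqinter>\<^bsub>PowL X\<^esub> s) ` S)"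
    by (subst (1 2) Sup_PowL) (auto simp: meet_PowL)
qed

lemma is_coframe_PowL: "is_coframe (PowL X)"
  unfolding is_coframe_def
proof (intro conjI ballI allI impI complete_lattice_PowL)
  fix a S assume "a \<in> carrier (PowL X)" "S \<subseteq> carrier (PowL X)"
  then have "(\<lambda>s. a \<squnion>\<^bsub>PowL X\<^esub> s) ` S = (\<lambda>s. a \<union> s) ` S"
    by (auto simp: join_PowL intro!: image_cong)
  with \<open>a \<in> carrier (PowL X)\<close> \<open>S \<subseteq> carrier (PowL X)\<close>
  show "a \<squnion>\<^bsub>PowL X\<^esub> \<Sqinter>\<^bsub>PowL X\<^esub>S = \<Sqinter>\<^bsub>PowL X\<^esub>((\<lambda>s. a \<squnion>\<^bsub>PowL X\<^esub> s) ` S)"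
    by (subst (1 2) Inf_PowL) (auto simp: join_PowL)
qed

lemma C_obj_PowL: "C_obj fr (PowL X)"
  by (simp add: C_obj_def is_frame_PowL is_coframe_PowL)

lemma
  assumes "complete_lattice L"
  shows complete_lattice_Inf_closed: "A \<subseteq> carrier L \<Longrightarrow> \<Sqinter>\<^bsub>L\<^esub> A \<in> carrier L"
    and complete_lattice_Sup_closed: "A \<subseteq> carrier L \<Longrightarrow> \<Squnion>\<^bsub>L\<^esub> A \<in> carrier L"
    and complete_lattice_meet_closed: "x \<in> carrier L \<Longrightarrow> y \<in> carrier L \<Longrightarrow> x \<sqinter>\<^bsub>L\<^esub> y \<in> carrier L"
    and complete_lattice_join_closed: "x \<in> carrier L \<Longrightarrow> y \<in> carrier L \<Longrightarrow> x \<squnion>\<^bsub>L\<^esub> y \<in> carrier L"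
    and complete_lattice_infi_closed: "f \<in> I \<rightarrow> carrier L \<Longrightarrow> infi L I f \<in> carrier L"
    and complete_lattice_supr_closed: "f \<in> I \<rightarrow> carrier L \<Longrightarrow> supr L I f \<in> carrier L"
proof -
  interpret complete_lattice L by fact
  show "A \<subseteq> carrier L \<Longrightarrow> \<Sqinter>\<^bsub>L\<^esub> A \<in> carrier L" "A \<subseteq> carrier L \<Longrightarrow> \<Squnion>\<^bsub>L\<^esub> A \<in> carrier L"
    "x \<in> carrier L \<Longrightarrow> y \<in> carrier L \<Longrightarrow> x \<sqinter>\<^bsub>L\<^esub> y \<in> carrier L"
    "x \<in> carrier L \<Longrightarrow> y \<in> carrier L \<Longrightarrow> x \<squnion>\<^bsub>L\<^esub> y \<in> carrier L"
    "f \<in> I \<rightarrow> carrier L \<Longrightarrow> infi L I f \<in> carrier L" "f \<in> I \<rightarrow> carrier L \<Longrightarrow> supr L I f \<in> carrier L"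
    by (auto simp: infi_def supr_def intro!: inf_closed sup_closed)
qed

lemma complete_lattice_if_C_obj: "C_obj fr L \<Longrightarrow> complete_lattice L"
  by (auto simp: C_obj_def is_frame_def is_coframe_def split: if_splits)

lemma C_hom_funcset: "C_hom fr II JJ L L' \<phi> \<Longrightarrow> \<phi> \<in> carrier L \<rightarrow>\<^sub>E carrier L'"
  by (simp add: C_hom_def)

lemma C_hom_closed: "C_hom fr II JJ L L' \<phi> \<Longrightarrow> x \<in> carrier L \<Longrightarrow> \<phi> x \<in> carrier L'"
  by (auto simp: C_hom_def)

lemma C_hom_mono:
  "C_hom fr II JJ L L' \<phi> \<Longrightarrow> x \<in> carrier L \<Longrightarrow> y \<in> carrier L \<Longrightarrow> x \<sqsubseteq>\<^bsub>L\<^esub> y \<Longrightarrow> \<phi> x \<sqsubseteq>\<^bsub>L'\<^esub> \<phi> y"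
  by (simp add: C_hom_def)

lemma C_hom_top: "C_hom fr II JJ L L' \<phi> \<Longrightarrow> \<phi> (\<Sqinter>\<^bsub>L\<^esub>{}) = \<Sqinter>\<^bsub>L'\<^esub>{}"
  by (cases fr) (auto simp: C_hom_def frame_hom_def coframe_hom_def)

lemma C_hom_meet:
  assumes "C_hom fr II JJ L L' \<phi>" "x \<in> carrier L" "y \<in> carrier L"
  shows "\<phi> (x \<sqinter>\<^bsub>L\<^esub> y) = \<phi> x \<sqinter>\<^bsub>L'\<^esub> \<phi> y"
proof (cases fr)
  case False
  with assms have "\<phi> (\<Sqinter>\<^bsub>L\<^esub>{x, y}) = \<Sqinter>\<^bsub>L'\<^esub>(\<phi> ` {x, y})"
    by (auto simp: C_hom_def coframe_hom_def)
  then show ?thesis by (simp add: meet_def)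
qed (use assms in \<open>auto simp: C_hom_def frame_hom_def\<close>)

lemma frame_hom_comp:
  assumes "complete_lattice L" "\<phi> \<in> carrier L \<rightarrow> carrier L'" "frame_hom L L' \<phi>" "frame_hom L' L'' \<psi>"
  shows "frame_hom L L'' (\<lambda>l\<in>carrier L. \<psi> (\<phi> l))"
proof -
  have "(\<lambda>l\<in>carrier L. \<psi> (\<phi> l)) ` S = \<psi> ` \<phi> ` S" "\<phi> ` S \<subseteq> carrier L'"
    if "S \<subseteq> carrier L" for S
    using that assms(2) by force+
  with assms show ?thesis
    by (auto simp: frame_hom_def complete_lattice_Inf_closed complete_lattice_Sup_closed
        complete_lattice_meet_closed funcset_mem[OF assms(2)])
qed

lemma coframe_hom_comp:
  assumes "complete_lattice L" "\<phi> \<in> carrier L \<rightarrow> carrier L'" "coframe_hom L L' \<phi>" "coframe_hom L' L'' \<psi>"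
  shows "coframe_hom L L'' (\<lambda>l\<in>carrier L. \<psi> (\<phi> l))"
proof -
  have "(\<lambda>l\<in>carrier L. \<psi> (\<phi> l)) ` S = \<psi> ` \<phi> ` S" "\<phi> ` S \<subseteq> carrier L'"
    if "S \<subseteq> carrier L" for S
    using that assms(2) by force+
  with assms show ?thesis
    by (auto simp: coframe_hom_def complete_lattice_Inf_closed complete_lattice_Sup_closed
        complete_lattice_join_closed funcset_mem[OF assms(2)])
qed

lemma infi_cong: "(\<And>i. i \<in> I \<Longrightarrow> f i = g i) \<Longrightarrow> infi L I f = infi L I g"
  by (simp add: infi_def cong: image_cong)

lemma supr_cong: "(\<And>i. i \<in> I \<Longrightarrow> f i = g i) \<Longrightarrow> supr L I f = supr L I g"
  by (simp add: supr_def cong: image_cong)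

lemma C_hom_comp:
  assumes L: "complete_lattice L" and \<phi>: "C_hom fr II JJ L L' \<phi>" and \<psi>: "C_hom fr II JJ L' L'' \<psi>"
  shows "C_hom fr II JJ L L'' (\<lambda>l\<in>carrier L. \<psi> (\<phi> l))"
proof -
  have \<phi>_funcset: "\<phi> \<in> carrier L \<rightarrow> carrier L'"
    using C_hom_funcset[OF \<phi>] by auto
  show ?thesis
    unfolding C_hom_def
  proof (intro conjI ballI impI)
    show "(\<lambda>l\<in>carrier L. \<psi> (\<phi> l)) \<in> carrier L \<rightarrow>\<^sub>E carrier L''"
      using \<phi>_funcset C_hom_closed[OF \<psi>] by auto
    show "if fr then frame_hom L L'' (\<lambda>l\<in>carrier L. \<psi> (\<phi> l))
      else coframe_hom L L'' (\<lambda>l\<in>carrier L. \<psi> (\<phi> l))"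
      using \<phi> \<psi> frame_hom_comp[OF L \<phi>_funcset] coframe_hom_comp[OF L \<phi>_funcset]
      by (auto simp: C_hom_def)
    show "(\<lambda>l\<in>carrier L. \<psi> (\<phi> l)) x \<sqsubseteq>\<^bsub>L''\<^esub> (\<lambda>l\<in>carrier L. \<psi> (\<phi> l)) y"
      if "x \<in> carrier L" "y \<in> carrier L" "x \<sqsubseteq>\<^bsub>L\<^esub> y" for x y
      using that C_hom_mono[OF \<phi>] C_hom_mono[OF \<psi>] C_hom_closed[OF \<phi>] by simp
  next
    fix I f assume "I \<in> II" and f: "f \<in> I \<rightarrow> carrier L"
    moreover have "\<phi> \<circ> f \<in> I \<rightarrow> carrier L'"
      using f \<phi>_funcset by fastforce
    ultimately have "\<psi> (\<phi> (infi L I f)) = infi L'' I (\<psi> \<circ> (\<phi> \<circ> f))"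
      using \<phi> \<psi> by (simp add: C_hom_def)
    with f show "(\<lambda>l\<in>carrier L. \<psi> (\<phi> l)) (infi L I f) =
        infi L'' I ((\<lambda>l\<in>carrier L. \<psi> (\<phi> l)) \<circ> f)"
      by (auto simp: complete_lattice_infi_closed[OF L] intro!: infi_cong)
  next
    fix J f assume "J \<in> JJ" and f: "f \<in> J \<rightarrow> carrier L"
    moreover have "\<phi> \<circ> f \<in> J \<rightarrow> carrier L'"
      using f \<phi>_funcset by fastforce
    ultimately have "\<psi> (\<phi> (supr L J f)) = supr L'' J (\<psi> \<circ> (\<phi> \<circ> f))"
      using \<phi> \<psi> by (simp add: C_hom_def)
    with f show "(\<lambda>l\<in>carrier L. \<psi> (\<phi> l)) (supr L J f) =
        supr L'' J ((\<lambda>l\<in>carrier L. \<psi> (\<phi> l)) \<circ> f)"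
      by (auto simp: complete_lattice_supr_closed[OF L] intro!: supr_cong)
  qed
qed

lemma
  assumes "Cconv_hom fr II JJ L lim L' lim' \<phi>"
  shows Cconv_hom_C_hom: "C_hom fr II JJ L L' \<phi>"
    and Cconv_hom_lim: "lat_filter L' F \<Longrightarrow> lim' F \<sqsubseteq>\<^bsub>L'\<^esub> \<phi> (lim {l \<in> carrier L. \<phi> l \<in> F})"
  using assms by (simp_all add: Cconv_hom_def)

lemma
  assumes "conv_lim L lim"
  shows conv_lim_closed: "lat_filter L F \<Longrightarrow> lim F \<in> carrier L"
    and conv_lim_mono: "lat_filter L F \<Longrightarrow> lat_filter L G \<Longrightarrow> F \<subseteq> G \<Longrightarrow> lim F \<sqsubseteq>\<^bsub>L\<^esub> lim G"
  using assms by (simp_all add: conv_lim_def)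

lemma lat_filter_top:
  assumes "complete_lattice L" "lat_filter L F"
  shows "\<Sqinter>\<^bsub>L\<^esub>{} \<in> F"
proof -
  interpret complete_lattice L by fact
  from assms(2) obtain x where "x \<in> F" "F \<subseteq> carrier L"
    by (auto simp: lat_filter_def)
  with assms(2) show ?thesis
    unfolding lat_filter_def by (meson inf_closed inf_greatest empty_iff empty_subsetI subsetD)
qed

lemma lat_filter_vimage:
  assumes L: "complete_lattice L" and L': "complete_lattice L'" and \<phi>: "C_hom fr II JJ L L' \<phi>"
    and G: "lat_filter L' G"
  shows "lat_filter L {l \<in> carrier L. \<phi> l \<in> G}"
  unfolding lat_filter_def
proof (intro conjI ballI impI)
  have "\<Sqinter>\<^bsub>L\<^esub>{} \<in> {l \<in> carrier L. \<phi> l \<in> G}"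
    using lat_filter_top[OF L' G] C_hom_top[OF \<phi>] complete_lattice_Inf_closed[OF L] by simp
  then show "{l \<in> carrier L. \<phi> l \<in> G} \<noteq> {}" by blast
next
  fix x y assume x: "x \<in> {l \<in> carrier L. \<phi> l \<in> G}"
  show "y \<in> {l \<in> carrier L. \<phi> l \<in> G}" if "y \<in> carrier L" "x \<sqsubseteq>\<^bsub>L\<^esub> y"
    using G x that C_hom_mono[OF \<phi>] C_hom_closed[OF \<phi>] unfolding lat_filter_def by blast
  show "x \<sqinter>\<^bsub>L\<^esub> y \<in> {l \<in> carrier L. \<phi> l \<in> G}" if "y \<in> {l \<in> carrier L. \<phi> l \<in> G}"
    using G x that C_hom_meet[OF \<phi>] complete_lattice_meet_closed[OF L] unfolding lat_filter_def by auto
qed auto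

section \<open>Morphisms into powersets are determined by points\<close>

lemma C_hom_PowL_iff:
  fixes II :: "'i set set" and JJ :: "'j set set"
  assumes L: "complete_lattice L"
  shows "C_hom fr II JJ L (PowL X) \<phi> \<longleftrightarrow> \<phi> \<in> carrier L \<rightarrow>\<^sub>E Pow X \<and>
    (if fr then \<phi> (\<Sqinter>\<^bsub>L\<^esub>{}) = X \<and>
        (\<forall>a\<in>carrier L. \<forall>b\<in>carrier L. \<phi> (a \<sqinter>\<^bsub>L\<^esub> b) = \<phi> a \<inter> \<phi> b) \<and>
        (\<forall>S. S \<subseteq> carrier L \<longrightarrow> \<phi> (\<Squnion>\<^bsub>L\<^esub>S) = \<Union>(\<phi> ` S))
     else \<phi> (\<Squnion>\<^bsub>L\<^esub>{}) = {} \<and>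
        (\<forall>a\<in>carrier L. \<forall>b\<in>carrier L. \<phi> (a \<squnion>\<^bsub>L\<^esub> b) = \<phi> a \<union> \<phi> b) \<and>
        (\<forall>S. S \<subseteq> carrier L \<longrightarrow> \<phi> (\<Sqinter>\<^bsub>L\<^esub>S) = X \<inter> \<Inter>(\<phi> ` S))) \<and>
    (\<forall>a\<in>carrier L. \<forall>b\<in>carrier L. a \<sqsubseteq>\<^bsub>L\<^esub> b \<longrightarrow> \<phi> a \<subseteq> \<phi> b) \<and>
    (\<forall>I\<in>II. \<forall>f\<in>I \<rightarrow> carrier L. \<phi> (infi L I f) = X \<inter> (\<Inter>i\<in>I. \<phi> (f i))) \<and>
    (\<forall>J\<in>JJ. \<forall>f\<in>J \<rightarrow> carrier L. \<phi> (supr L J f) = (\<Union>j\<in>J. \<phi> (f j)))"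
proof (cases "\<phi> \<in> carrier L \<rightarrow>\<^sub>E Pow X")
  case True
  then have "\<phi> a \<subseteq> X" if "a \<in> carrier L" for a
    using that by auto
  moreover have "\<phi> ` S \<subseteq> Pow X" if "S \<subseteq> carrier L" for S
    using that True by auto
  moreover have "infi (PowL X) I (\<phi> \<circ> f) = X \<inter> (\<Inter>i\<in>I. \<phi> (f i))"
    if "f \<in> I \<rightarrow> carrier L" for f and I :: "'i set"
    using that True by (subst infi_PowL) fastforce+
  moreover have "supr (PowL X) J (\<phi> \<circ> f) = (\<Union>j\<in>J. \<phi> (f j))"
    if "f \<in> J \<rightarrow> carrier L" for f and J :: "'j set"
    using that True by (subst supr_PowL) fastforce+
  ultimately show ?thesis
    using True by (simp add: C_hom_def frame_hom_def coframe_hom_def Inf_PowL Sup_PowL meet_PowL join_PowL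
        infi_PowL supr_PowL complete_lattice_Inf_closed[OF L] complete_lattice_Sup_closed[OF L]
        complete_lattice_meet_closed[OF L] complete_lattice_join_closed[OF L]
        complete_lattice_infi_closed[OF L] complete_lattice_supr_closed[OF L])
qed (simp add: C_hom_def)

text \<open>A C-morphism from L into the two-element lattice P(1), represented by the predicate
  of the elements it sends to the top.\<close>

definition C_hom_bool :: "bool \<Rightarrow> 'i set set \<Rightarrow> 'j set set \<Rightarrow> ('a, 'c) gorder_scheme \<Rightarrow> ('a \<Rightarrow> bool) \<Rightarrow> bool"
  where "C_hom_bool fr II JJ L P \<longleftrightarrow>
    (if fr then P (\<Sqinter>\<^bsub>L\<^esub>{}) \<and>
        (\<forall>a\<in>carrier L. \<forall>b\<in>carrier L. P (a \<sqinter>\<^bsub>L\<^esub> b) \<longleftrightarrow> P a \<and> P b) \<and>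
        (\<forall>S. S \<subseteq> carrier L \<longrightarrow> (P (\<Squnion>\<^bsub>L\<^esub>S) \<longleftrightarrow> (\<exists>s\<in>S. P s)))
     else \<not> P (\<Squnion>\<^bsub>L\<^esub>{}) \<and>
        (\<forall>a\<in>carrier L. \<forall>b\<in>carrier L. P (a \<squnion>\<^bsub>L\<^esub> b) \<longleftrightarrow> P a \<or> P b) \<and>
        (\<forall>S. S \<subseteq> carrier L \<longrightarrow> (P (\<Sqinter>\<^bsub>L\<^esub>S) \<longleftrightarrow> (\<forall>s\<in>S. P s)))) \<and>
    (\<forall>a\<in>carrier L. \<forall>b\<in>carrier L. a \<sqsubseteq>\<^bsub>L\<^esub> b \<longrightarrow> P a \<longrightarrow> P b) \<and>
    (\<forall>I\<in>II. \<forall>f\<in>I \<rightarrow> carrier L. P (infi L I f) \<longleftrightarrow> (\<forall>i\<in>I. P (f i))) \<and>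
    (\<forall>J\<in>JJ. \<forall>f\<in>J \<rightarrow> carrier L. P (supr L J f) \<longleftrightarrow> (\<exists>j\<in>J. P (f j)))"

lemma C_hom_bool_cong:
  assumes L: "complete_lattice L" and PQ: "\<And>l. l \<in> carrier L \<Longrightarrow> P l \<longleftrightarrow> Q l"
  shows "C_hom_bool fr II JJ L P \<longleftrightarrow> C_hom_bool fr II JJ L Q"
  unfolding C_hom_bool_def
  by (simp add: PQ subset_eq Pi_iff complete_lattice_Inf_closed[OF L] complete_lattice_Sup_closed[OF L]
    complete_lattice_meet_closed[OF L] complete_lattice_join_closed[OF L]
    complete_lattice_infi_closed[OF L] complete_lattice_supr_closed[OF L] cong: conj_cong)

lemma C_hom_bool_PowL_mem:
  assumes "y \<in> Y"
  shows "C_hom_bool fr II JJ (PowL Y) (\<lambda>B. y \<in> B)"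
  using assms
  by (simp add: C_hom_bool_def Inf_PowL Sup_PowL meet_PowL join_PowL infi_PowL supr_PowL
      subset_eq Pi_iff)

lemma C_hom_PowL_if_pointwise:
  assumes L: "complete_lattice L" and \<phi>: "\<phi> \<in> carrier L \<rightarrow>\<^sub>E Pow X"
    and pts: "\<forall>x\<in>X. C_hom_bool fr II JJ L (\<lambda>l. x \<in> \<phi> l)"
  shows "C_hom fr II JJ L (PowL X) \<phi>"
proof -
  have sub: "\<phi> l \<subseteq> X" if "l \<in> carrier L" for l
    using that \<phi> by auto
  have ext: "\<phi> l = B" if "l \<in> carrier L" "B \<subseteq> X" "\<And>x. x \<in> X \<Longrightarrow> x \<in> \<phi> l \<longleftrightarrow> x \<in> B" for l B
    using that sub by blast
  note closed = complete_lattice_Inf_closed[OF L] complete_lattice_Sup_closed[OF L]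
    complete_lattice_meet_closed[OF L] complete_lattice_join_closed[OF L]
    complete_lattice_infi_closed[OF L] complete_lattice_supr_closed[OF L]
  have pts_mono: "\<forall>x\<in>X. \<forall>a\<in>carrier L. \<forall>b\<in>carrier L. a \<sqsubseteq>\<^bsub>L\<^esub> b \<longrightarrow> x \<in> \<phi> a \<longrightarrow> x \<in> \<phi> b"
    and pts_infi: "\<forall>x\<in>X. \<forall>I\<in>II. \<forall>f\<in>I \<rightarrow> carrier L.
      x \<in> \<phi> (infi L I f) \<longleftrightarrow> (\<forall>i\<in>I. x \<in> \<phi> (f i))"
    and pts_supr: "\<forall>x\<in>X. \<forall>J\<in>JJ. \<forall>f\<in>J \<rightarrow> carrier L.
      x \<in> \<phi> (supr L J f) \<longleftrightarrow> (\<exists>j\<in>J. x \<in> \<phi> (f j))"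
    using pts by (simp_all add: C_hom_bool_def ball_conj_distrib)
  show ?thesis
    unfolding C_hom_PowL_iff[OF L]
  proof (intro conjI \<phi>, goal_cases frame_or_coframe mono infi supr)
    case frame_or_coframe
    show ?case
    proof (cases fr)
      case True
      with pts have "\<forall>x\<in>X. C_hom_bool True II JJ L (\<lambda>l. x \<in> \<phi> l)"
        by simp
      then show ?thesis
        unfolding if_P[OF True] C_hom_bool_def if_True ball_conj_distrib
        by (intro conjI ballI allI impI ext) (auto simp: closed dest: subsetD[OF sub])
    next
      case False
      with pts have "\<forall>x\<in>X. C_hom_bool False II JJ L (\<lambda>l. x \<in> \<phi> l)"
        by simp
      then show ?thesis
        unfolding if_not_P[OF False] C_hom_bool_def if_False ball_conj_distrib
        by (intro conjI ballI allI impI ext) (auto simp: closed dest: subsetD[OF sub])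
    qed
  next
    case mono
    show ?case
      using pts_mono sub by blast
  next
    case infi
    show ?case
      using pts_infi closed(5) by (intro ballI ext) auto
  next
    case supr
    show ?case
      using pts_supr sub closed(6) by (intro ballI ext) (auto simp: UN_subset_iff Pi_iff)
  qed
qed

lemma C_hom_PowL_UNIV_iff:
  assumes L: "complete_lattice L"
  shows "C_hom fr II JJ L (PowL (UNIV :: unit set)) \<psi> \<longleftrightarrow>
    \<psi> \<in> extensional (carrier L) \<and> C_hom_bool fr II JJ L (\<lambda>l. () \<in> \<psi> l)"
proof -
  have unit_set_eq: "A = B \<longleftrightarrow> (() \<in> A \<longleftrightarrow> () \<in> B)" for A B :: "unit set"
    by (auto simp: set_eq_iff)
  have unit_subset: "A \<subseteq> B \<longleftrightarrow> (() \<in> A \<longrightarrow> () \<in> B)" for A B :: "unit set"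
    by (auto simp: subset_iff)
  show ?thesis
    unfolding C_hom_PowL_iff[OF L] C_hom_bool_def
    by (simp add: unit_set_eq unit_subset PiE_def)
qed

lemma C_hom_PowL_UNIV_restrict_iff:
  assumes L: "complete_lattice L"
  shows "C_hom fr II JJ L (PowL UNIV) (\<lambda>l\<in>carrier L. {_::unit. P l}) \<longleftrightarrow> C_hom_bool fr II JJ L P"
proof -
  have "C_hom_bool fr II JJ L (\<lambda>l. () \<in> (\<lambda>l\<in>carrier L. {_::unit. P l}) l) \<longleftrightarrow> C_hom_bool fr II JJ L P"
    by (rule C_hom_bool_cong[OF L]) simp
  then show ?thesis
    by (simp add: C_hom_PowL_UNIV_iff[OF L])
qed

lemma C_hom_bool_comp:
  assumes L: "complete_lattice L" and L': "complete_lattice L'"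
    and \<phi>: "C_hom fr II JJ L L' \<phi>" and P: "C_hom_bool fr II JJ L' P"
  shows "C_hom_bool fr II JJ L (\<lambda>l. P (\<phi> l))"
proof -
  have "C_hom fr II JJ L' (PowL UNIV) (\<lambda>l'\<in>carrier L'. {_::unit. P l'})"
    using P by (rule C_hom_PowL_UNIV_restrict_iff[OF L', THEN iffD2])
  then have "C_hom fr II JJ L (PowL UNIV) (\<lambda>l\<in>carrier L. (\<lambda>l'\<in>carrier L'. {_::unit. P l'}) (\<phi> l))"
    by (rule C_hom_comp[OF L \<phi>])
  moreover have "(\<lambda>l\<in>carrier L. (\<lambda>l'\<in>carrier L'. {_::unit. P l'}) (\<phi> l)) = (\<lambda>l\<in>carrier L. {_. P (\<phi> l)})"
    using C_hom_closed[OF \<phi>] by (auto intro: restrict_ext)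
  ultimately show ?thesis
    by (simp only: C_hom_PowL_UNIV_restrict_iff[OF L])
qed

lemma C_hom_PowL_pointwise:
  assumes L: "complete_lattice L" and \<phi>: "\<phi> \<in> carrier L \<rightarrow>\<^sub>E Pow X"
  shows "C_hom fr II JJ L (PowL X) \<phi> \<longleftrightarrow> (\<forall>x\<in>X. C_hom_bool fr II JJ L (\<lambda>l. x \<in> \<phi> l))"
proof
  assume hom: "C_hom fr II JJ L (PowL X) \<phi>"
  show "\<forall>x\<in>X. C_hom_bool fr II JJ L (\<lambda>l. x \<in> \<phi> l)"
    using C_hom_bool_comp[OF L complete_lattice_PowL hom C_hom_bool_PowL_mem] by simp
qed (rule C_hom_PowL_if_pointwise[OF L \<phi>])

text \<open>For frames, Y is the union of its singletons, so P holds at some {y}; for coframes,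
  dually, P fails at some Y - {y}.\<close>

lemma C_hom_bool_PowL_imp_mem:
  assumes P: "C_hom_bool fr II JJ (PowL Y) P"
  shows "\<exists>y\<in>Y. \<forall>B\<subseteq>Y. P B \<longleftrightarrow> y \<in> B"
proof (cases fr)
  case True
  with P have top: "P Y" and meet: "\<And>a b. a \<subseteq> Y \<Longrightarrow> b \<subseteq> Y \<Longrightarrow> P (a \<inter> b) \<longleftrightarrow> P a \<and> P b"
    and Sup: "\<And>S. S \<subseteq> Pow Y \<Longrightarrow> P (\<Union>S) \<longleftrightarrow> (\<exists>s\<in>S. P s)"
    by (auto simp: C_hom_bool_def Inf_PowL meet_PowL Sup_PowL)
  have "P (\<Union>y\<in>Y. {y})"
    using top by simp
  then obtain y where y: "y \<in> Y" "P {y}"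
    using Sup[of "(\<lambda>y. {y}) ` Y"] by auto
  have "P B \<longleftrightarrow> y \<in> B" if "B \<subseteq> Y" for B
  proof -
    have "{y} \<inter> B = (if y \<in> B then {y} else {})"
      by auto
    then show ?thesis
      using meet[of "{y}" B] Sup[of "{}"] y that by auto
  qed
  with y show ?thesis by blast
next
  case False
  with P have bot: "\<not> P {}" and join: "\<And>a b. a \<subseteq> Y \<Longrightarrow> b \<subseteq> Y \<Longrightarrow> P (a \<union> b) \<longleftrightarrow> P a \<or> P b"
    and Inf: "\<And>S. S \<subseteq> Pow Y \<Longrightarrow> P (Y \<inter> \<Inter>S) \<longleftrightarrow> (\<forall>s\<in>S. P s)"
    by (auto simp: C_hom_bool_def Inf_PowL join_PowL Sup_PowL)
  have "\<not> P (Y \<inter> (\<Inter>y\<in>Y. Y - {y}))"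
    using bot by (simp add: Int_absorb2)
  then obtain y where y: "y \<in> Y" "\<not> P (Y - {y})"
    using Inf[of "(\<lambda>y. Y - {y}) ` Y"] by auto
  have "P B \<longleftrightarrow> y \<in> B" if "B \<subseteq> Y" for B
  proof -
    have "B \<union> (Y - {y}) = (if y \<in> B then Y else Y - {y})"
      using y that by auto
    then show ?thesis
      using join[of B "Y - {y}"] Inf[of "{}"] y that by auto
  qed
  with y show ?thesis by blast
qed

section \<open>The functor P\<close>

lemma
  assumes "conv_space X cv"
  shows conv_space_filter: "cv F x \<Longrightarrow> set_filter X F"
    and conv_space_point: "cv F x \<Longrightarrow> x \<in> X"
    and conv_space_principal: "x \<in> X \<Longrightarrow> cv {S. S \<subseteq> X \<and> x \<in> S} x"
    and conv_space_mono: "cv F x \<Longrightarrow> set_filter X G \<Longrightarrow> F \<subseteq> G \<Longrightarrow> cv G x"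
  using assms unfolding conv_space_def by blast+

lemma conv_lim_pow_lim:
  assumes "conv_space X cv"
  shows "conv_lim (PowL X) (pow_lim X cv)"
  unfolding conv_lim_def
proof (intro conjI allI impI)
  show "pow_lim X cv F \<in> carrier (PowL X)" for F
    by (auto simp: pow_lim_def)
  show "pow_lim X cv F \<sqsubseteq>\<^bsub>PowL X\<^esub> pow_lim X cv G"
    if "lat_filter (PowL X) F \<and> lat_filter (PowL X) G \<and> F \<subseteq> G" for F G
    using conv_space_mono[OF assms] that by (auto simp: pow_lim_def)
qed

lemma vimage_pow_map_eq_img_filter: "{B \<in> carrier (PowL Y). pow_map X Y f B \<in> F} = img_filter X Y f F"
  by (auto simp: pow_map_def img_filter_def)

lemma pow_map_C_hom:
  assumes f: "f \<in> X \<rightarrow> Y"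
  shows "C_hom fr II JJ (PowL Y) (PowL X) (pow_map X Y f)"
proof (subst C_hom_PowL_pointwise[OF complete_lattice_PowL])
  show "pow_map X Y f \<in> carrier (PowL Y) \<rightarrow>\<^sub>E Pow X"
    by (auto simp: pow_map_def)
  show "\<forall>x\<in>X. C_hom_bool fr II JJ (PowL Y) (\<lambda>B. x \<in> pow_map X Y f B)"
  proof
    fix x assume x: "x \<in> X"
    have "C_hom_bool fr II JJ (PowL Y) (\<lambda>B. x \<in> pow_map X Y f B) \<longleftrightarrow>
        C_hom_bool fr II JJ (PowL Y) (\<lambda>B. f x \<in> B)"
      using x by (intro C_hom_bool_cong[OF complete_lattice_PowL]) (simp add: pow_map_def)
    with f x show "C_hom_bool fr II JJ (PowL Y) (\<lambda>B. x \<in> pow_map X Y f B)"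
      by (simp add: C_hom_bool_PowL_mem funcset_mem)
  qed
qed

lemma set_filter_img_filter:
  assumes "f \<in> X \<rightarrow> Y" "set_filter X F"
  shows "set_filter Y (img_filter X Y f F)"
  using lat_filter_vimage[OF complete_lattice_PowL complete_lattice_PowL pow_map_C_hom[OF assms(1)] assms(2)]
  unfolding vimage_pow_map_eq_img_filter .

lemma Cconv_hom_pow_map:
  assumes f: "continuous_conv X cvX Y cvY f"
  shows "Cconv_hom fr II JJ (PowL Y) (pow_lim Y cvY) (PowL X) (pow_lim X cvX) (pow_map X Y f)"
  unfolding Cconv_hom_def vimage_pow_map_eq_img_filter
proof (intro conjI allI impI)
  have "f \<in> X \<rightarrow>\<^sub>E Y"
    using f by (simp add: continuous_conv_def)
  then show "C_hom fr II JJ (PowL Y) (PowL X) (pow_map X Y f)"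
    by (intro pow_map_C_hom) auto
  show "pow_lim X cvX F \<sqsubseteq>\<^bsub>PowL X\<^esub> pow_map X Y f (pow_lim Y cvY (img_filter X Y f F))" for F
    using f by (auto simp: pow_lim_def pow_map_def continuous_conv_def)
qed

lemma inj_on_pow_map: "inj_on (pow_map X Y) (X \<rightarrow>\<^sub>E Y)"
proof (rule inj_onI)
  fix f g assume f: "f \<in> X \<rightarrow>\<^sub>E Y" and g: "g \<in> X \<rightarrow>\<^sub>E Y" and eq: "pow_map X Y f = pow_map X Y g"
  show "f = g"
  proof (rule PiE_ext[OF f g])
    fix x assume "x \<in> X"
    then have "f x \<in> Y" "x \<in> pow_map X Y g {f x}"
      using f eq[symmetric] by (auto simp: pow_map_def)
    then show "f x = g x"
      by (simp add: pow_map_def)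
  qed
qed

lemma Cconv_hom_PowL_eq_pow_map:
  assumes X: "conv_space X cvX"
    and \<phi>: "Cconv_hom fr II JJ (PowL Y) (pow_lim Y cvY) (PowL X) (pow_lim X cvX) \<phi>"
  shows "\<exists>f. continuous_conv X cvX Y cvY f \<and> pow_map X Y f = \<phi>"
proof -
  have hom: "C_hom fr II JJ (PowL Y) (PowL X) \<phi>"
    using \<phi> by (rule Cconv_hom_C_hom)
  from C_hom_funcset[OF hom] have \<phi>_PiE: "\<phi> \<in> Pow Y \<rightarrow>\<^sub>E Pow X"
    by simp
  have "\<forall>x\<in>X. C_hom_bool fr II JJ (PowL Y) (\<lambda>B. x \<in> \<phi> B)"
    using hom \<phi>_PiE by (simp add: C_hom_PowL_pointwise[OF complete_lattice_PowL])
  then have "\<forall>x\<in>X. \<exists>y\<in>Y. \<forall>B\<subseteq>Y. x \<in> \<phi> B \<longleftrightarrow> y \<in> B"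
    using C_hom_bool_PowL_imp_mem by blast
  then obtain g where g: "\<forall>x\<in>X. g x \<in> Y \<and> (\<forall>B\<subseteq>Y. x \<in> \<phi> B \<longleftrightarrow> g x \<in> B)"
    by metis
  define f where "f = restrict g X"
  have f: "f \<in> X \<rightarrow>\<^sub>E Y"
    using g by (simp add: f_def)
  have f_pow_map: "pow_map X Y f = \<phi>"
  proof
    fix B
    show "pow_map X Y f B = \<phi> B"
      using g \<phi>_PiE by (cases "B \<subseteq> Y") (auto simp: pow_map_def f_def)
  qed
  have "continuous_conv X cvX Y cvY f"
    unfolding continuous_conv_def
  proof (intro conjI allI impI f)
    fix F x assume cv: "cvX F x"
    then have F: "set_filter X F" and "x \<in> X"
      using conv_space_filter[OF X] conv_space_point[OF X] by auto
    with cv have "x \<in> \<phi> (pow_lim Y cvY {B \<in> carrier (PowL Y). \<phi> B \<in> F})"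
      using Cconv_hom_lim[OF \<phi> F] by (auto simp: pow_lim_def)
    with \<open>x \<in> X\<close> show "cvY (img_filter X Y f F) (f x)"
      unfolding f_pow_map[symmetric] vimage_pow_map_eq_img_filter by (simp add: pow_map_def pow_lim_def)
  qed
  with f_pow_map show ?thesis
    by blast
qed

lemma bij_betw_pow_map:
  assumes "conv_space X cvX"
  shows "bij_betw (pow_map X Y) {f. continuous_conv X cvX Y cvY f}
    {\<phi>. Cconv_hom fr II JJ (PowL Y) (pow_lim Y cvY) (PowL X) (pow_lim X cvX) \<phi>}"
  unfolding bij_betw_def
proof
  show "inj_on (pow_map X Y) {f. continuous_conv X cvX Y cvY f}"
    by (rule inj_on_subset[OF inj_on_pow_map]) (auto simp: continuous_conv_def)
  show "pow_map X Y ` {f. continuous_conv X cvX Y cvY f} =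
    {\<phi>. Cconv_hom fr II JJ (PowL Y) (pow_lim Y cvY) (PowL X) (pow_lim X cvX) \<phi>}"
    using Cconv_hom_pow_map Cconv_hom_PowL_eq_pow_map[OF assms] by blast
qed

section \<open>The spectrum pt and the counit\<close>

lemma unit_set_eq_UNIV_iff [simp]: "(A :: unit set) = UNIV \<longleftrightarrow> () \<in> A"
  by auto

lemma mem_pt_iff: "\<psi> \<in> pt fr II JJ L lim \<longleftrightarrow> C_hom fr II JJ L (PowL UNIV) \<psi> \<and>
    (\<forall>F. set_filter UNIV F \<longrightarrow> () \<in> \<psi> (lim {l \<in> carrier L. \<psi> l \<in> F}))"
  by (auto simp: pt_def Cconv_hom_def UNIV_unit)

lemma C_hom_pt: "\<psi> \<in> pt fr II JJ L lim \<Longrightarrow> C_hom fr II JJ L (PowL UNIV) \<psi>"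
  by (simp add: mem_pt_iff)

lemma mem_bullet_iff: "\<psi> \<in> bullet fr II JJ L lim l \<longleftrightarrow> \<psi> \<in> pt fr II JJ L lim \<and> () \<in> \<psi> l"
  by (simp add: bullet_def)

lemma C_hom_bool_pt:
  assumes "complete_lattice L" "\<psi> \<in> pt fr II JJ L lim"
  shows "C_hom_bool fr II JJ L (\<lambda>l. () \<in> \<psi> l)"
  using C_hom_pt[OF assms(2)] by (simp add: C_hom_PowL_UNIV_iff[OF assms(1)])

lemma counit_C_hom:
  assumes L: "complete_lattice L"
  shows "C_hom fr II JJ L (PowL (pt fr II JJ L lim)) (counit fr II JJ L lim)"
proof (subst C_hom_PowL_pointwise[OF L])
  show "counit fr II JJ L lim \<in> carrier L \<rightarrow>\<^sub>E Pow (pt fr II JJ L lim)"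
    by (auto simp: counit_def mem_bullet_iff)
  show "\<forall>\<psi>\<in>pt fr II JJ L lim. C_hom_bool fr II JJ L (\<lambda>l. \<psi> \<in> counit fr II JJ L lim l)"
  proof
    fix \<psi> assume \<psi>: "\<psi> \<in> pt fr II JJ L lim"
    have "C_hom_bool fr II JJ L (\<lambda>l. \<psi> \<in> counit fr II JJ L lim l) \<longleftrightarrow> C_hom_bool fr II JJ L (\<lambda>l. () \<in> \<psi> l)"
      using \<psi> by (intro C_hom_bool_cong[OF L]) (simp add: counit_def mem_bullet_iff)
    with C_hom_bool_pt[OF L \<psi>] show "C_hom_bool fr II JJ L (\<lambda>l. \<psi> \<in> counit fr II JJ L lim l)"
      by simp
  qed
qed

lemma circ_eq_vimage_counit: "circ fr II JJ L lim F = {l \<in> carrier L. counit fr II JJ L lim l \<in> F}"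
  by (auto simp: circ_def counit_def)

lemma lat_filter_circ:
  assumes "complete_lattice L" "set_filter (pt fr II JJ L lim) F"
  shows "lat_filter L (circ fr II JJ L lim F)"
  unfolding circ_eq_vimage_counit
  using assms by (intro lat_filter_vimage[OF _ complete_lattice_PowL counit_C_hom])

lemma Cconv_hom_counit:
  assumes L: "complete_lattice L" and lim: "conv_lim L lim"
  shows "Cconv_hom fr II JJ L lim (PowL (pt fr II JJ L lim)) (pow_lim (pt fr II JJ L lim) (pt_conv fr II JJ L lim))
    (counit fr II JJ L lim)"
  unfolding Cconv_hom_def circ_eq_vimage_counit[symmetric]
proof (intro conjI allI impI counit_C_hom[OF L])
  fix F assume "set_filter (pt fr II JJ L lim) F"
  then have "lim (circ fr II JJ L lim F) \<in> carrier L"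
    by (intro conv_lim_closed[OF lim] lat_filter_circ[OF L])
  then show "pow_lim (pt fr II JJ L lim) (pt_conv fr II JJ L lim) F \<sqsubseteq>\<^bsub>PowL (pt fr II JJ L lim)\<^esub>
      counit fr II JJ L lim (lim (circ fr II JJ L lim F))"
    by (auto simp: pow_lim_def pt_conv_def counit_def)
qed

lemma set_filter_principal: "x \<in> X \<Longrightarrow> set_filter X {S. S \<subseteq> X \<and> x \<in> S}"
  unfolding lat_filter_def by (auto simp: meet_PowL)

lemma conv_space_pt:
  assumes L: "complete_lattice L" and lim: "conv_lim L lim"
  shows "conv_space (pt fr II JJ L lim) (pt_conv fr II JJ L lim)"
  unfolding conv_space_def
proof (intro conjI allI impI ballI)
  fix F \<psi> assume "pt_conv fr II JJ L lim F \<psi>"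
  then show "set_filter (pt fr II JJ L lim) F" "\<psi> \<in> pt fr II JJ L lim"
    by (simp_all add: pt_conv_def mem_bullet_iff)
next
  fix \<psi> assume \<psi>: "\<psi> \<in> pt fr II JJ L lim"
  have "circ fr II JJ L lim {S. S \<subseteq> pt fr II JJ L lim \<and> \<psi> \<in> S} =
      {l \<in> carrier L. \<psi> l \<in> {S. S \<subseteq> UNIV \<and> () \<in> S}}"
    using \<psi> by (auto simp: circ_def mem_bullet_iff)
  moreover have "() \<in> \<psi> (lim {l \<in> carrier L. \<psi> l \<in> {S. S \<subseteq> UNIV \<and> () \<in> S}})"
    using \<psi> set_filter_principal[of "()" UNIV] unfolding mem_pt_iff by blast
  ultimately show "pt_conv fr II JJ L lim {S. S \<subseteq> pt fr II JJ L lim \<and> \<psi> \<in> S} \<psi>"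
    using \<psi> set_filter_principal[OF \<psi>] by (simp add: pt_conv_def mem_bullet_iff)
next
  fix F G \<psi>
  assume "pt_conv fr II JJ L lim F \<psi> \<and> set_filter (pt fr II JJ L lim) G \<and> F \<subseteq> G"
  then have F: "set_filter (pt fr II JJ L lim) F" and G: "set_filter (pt fr II JJ L lim) G"
    and "F \<subseteq> G" and \<psi>: "\<psi> \<in> pt fr II JJ L lim" and \<psi>F: "() \<in> \<psi> (lim (circ fr II JJ L lim F))"
    by (auto simp: pt_conv_def mem_bullet_iff)
  have circ_F: "lat_filter L (circ fr II JJ L lim F)" and circ_G: "lat_filter L (circ fr II JJ L lim G)"
    using lat_filter_circ[OF L F] lat_filter_circ[OF L G] .
  moreover have "circ fr II JJ L lim F \<subseteq> circ fr II JJ L lim G"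
    using \<open>F \<subseteq> G\<close> by (auto simp: circ_def)
  ultimately have "lim (circ fr II JJ L lim F) \<sqsubseteq>\<^bsub>L\<^esub> lim (circ fr II JJ L lim G)"
    by (rule conv_lim_mono[OF lim])
  then have "() \<in> \<psi> (lim (circ fr II JJ L lim G))"
    using \<psi>F C_hom_mono[OF C_hom_pt[OF \<psi>]]
      conv_lim_closed[OF lim circ_F] conv_lim_closed[OF lim circ_G] by auto
  with G \<psi> show "pt_conv fr II JJ L lim G \<psi>"
    by (simp add: pt_conv_def mem_bullet_iff)
qed

section \<open>Functoriality of pt\<close>

context
  fixes fr :: bool and II :: "'i set set" and JJ :: "'j set set"
    and L :: "'a gorder" and lim and L' :: "'b gorder" and lim' and \<phi>
  assumes L: "complete_lattice L" and L': "complete_lattice L'"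
    and lim: "conv_lim L lim" and lim': "conv_lim L' lim'"
    and \<phi>: "Cconv_hom fr II JJ L lim L' lim' \<phi>"
begin

lemma pt_comp_mem:
  assumes \<psi>: "\<psi> \<in> pt fr II JJ L' lim'"
  shows "(\<lambda>l\<in>carrier L. \<psi> (\<phi> l)) \<in> pt fr II JJ L lim"
  unfolding mem_pt_iff
proof (intro conjI allI impI)
  have \<phi>_hom: "C_hom fr II JJ L L' \<phi>" and \<psi>_hom: "C_hom fr II JJ L' (PowL UNIV) \<psi>"
    using Cconv_hom_C_hom[OF \<phi>] C_hom_pt[OF \<psi>] .
  then show "C_hom fr II JJ L (PowL UNIV) (\<lambda>l\<in>carrier L. \<psi> (\<phi> l))"
    by (rule C_hom_comp[OF L])
  fix F :: "unit set set" assume F: "set_filter UNIV F"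
  define G where "G = {l' \<in> carrier L'. \<psi> l' \<in> F}"
  have G: "lat_filter L' G"
    unfolding G_def by (rule lat_filter_vimage[OF L' complete_lattice_PowL \<psi>_hom F])
  then have \<phi>G: "lat_filter L {l \<in> carrier L. \<phi> l \<in> G}"
    by (rule lat_filter_vimage[OF L L' \<phi>_hom])
  have "() \<in> \<psi> (lim' G)"
    using \<psi> F by (simp add: mem_pt_iff G_def)
  moreover have "lim' G \<sqsubseteq>\<^bsub>L'\<^esub> \<phi> (lim {l \<in> carrier L. \<phi> l \<in> G})"
    by (rule Cconv_hom_lim[OF \<phi> G])
  ultimately have "() \<in> \<psi> (\<phi> (lim {l \<in> carrier L. \<phi> l \<in> G}))"
    using C_hom_mono[OF \<psi>_hom] conv_lim_closed[OF lim' G] conv_lim_closed[OF lim \<phi>G]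
      C_hom_closed[OF \<phi>_hom] by fastforce
  moreover have "{l \<in> carrier L. \<phi> l \<in> G} = {l \<in> carrier L. (\<lambda>l\<in>carrier L. \<psi> (\<phi> l)) l \<in> F}"
    using C_hom_closed[OF \<phi>_hom] by (auto simp: G_def)
  ultimately show "() \<in> (\<lambda>l\<in>carrier L. \<psi> (\<phi> l)) (lim {l \<in> carrier L. (\<lambda>l\<in>carrier L. \<psi> (\<phi> l)) l \<in> F})"
    using conv_lim_closed[OF lim \<phi>G] by simp
qed

lemma pt_map_funcset: "pt_map fr II JJ L lim L' lim' \<phi> \<in> pt fr II JJ L' lim' \<rightarrow>\<^sub>E pt fr II JJ L lim"
  using pt_comp_mem by (simp add: pt_map_def)

lemma vimage_pt_map_bullet:
  assumes "l \<in> carrier L"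
  shows "{\<psi> \<in> pt fr II JJ L' lim'. pt_map fr II JJ L lim L' lim' \<phi> \<psi> \<in> bullet fr II JJ L lim l} =
    bullet fr II JJ L' lim' (\<phi> l)"
  using assms pt_comp_mem by (auto simp: pt_map_def mem_bullet_iff)

lemma pow_map_pt_map_counit:
  assumes "l \<in> carrier L"
  shows "pow_map (pt fr II JJ L' lim') (pt fr II JJ L lim) (pt_map fr II JJ L lim L' lim' \<phi>)
    (counit fr II JJ L lim l) = counit fr II JJ L' lim' (\<phi> l)"
  using assms vimage_pt_map_bullet C_hom_closed[OF Cconv_hom_C_hom[OF \<phi>]]
  by (auto simp: counit_def pow_map_def mem_bullet_iff)

lemma continuous_pt_map:
  "continuous_conv (pt fr II JJ L' lim') (pt_conv fr II JJ L' lim') (pt fr II JJ L lim) (pt_conv fr II JJ L lim)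
    (pt_map fr II JJ L lim L' lim' \<phi>)"
  unfolding continuous_conv_def
proof (intro conjI allI impI pt_map_funcset)
  have \<phi>_hom: "C_hom fr II JJ L L' \<phi>"
    using \<phi> by (rule Cconv_hom_C_hom)
  fix F \<psi> assume "pt_conv fr II JJ L' lim' F \<psi>"
  then have F: "set_filter (pt fr II JJ L' lim') F" and \<psi>: "\<psi> \<in> pt fr II JJ L' lim'"
    and \<psi>F: "() \<in> \<psi> (lim' (circ fr II JJ L' lim' F))"
    by (auto simp: pt_conv_def mem_bullet_iff)
  define I where "I = img_filter (pt fr II JJ L' lim') (pt fr II JJ L lim) (pt_map fr II JJ L lim L' lim' \<phi>) F"
  have I: "set_filter (pt fr II JJ L lim) I"
    unfolding I_def using pt_map_funcset F by (intro set_filter_img_filter) auto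
  have "circ fr II JJ L lim I = {l \<in> carrier L. \<phi> l \<in> circ fr II JJ L' lim' F}"
    using vimage_pt_map_bullet C_hom_closed[OF \<phi>_hom]
    by (auto simp: I_def circ_def img_filter_def bullet_def)
  then have "lim' (circ fr II JJ L' lim' F) \<sqsubseteq>\<^bsub>L'\<^esub> \<phi> (lim (circ fr II JJ L lim I))"
    using Cconv_hom_lim[OF \<phi> lat_filter_circ[OF L' F]] by simp
  moreover have "lim (circ fr II JJ L lim I) \<in> carrier L"
    by (rule conv_lim_closed[OF lim lat_filter_circ[OF L I]])
  ultimately have "() \<in> \<psi> (\<phi> (lim (circ fr II JJ L lim I)))"
    using \<psi>F C_hom_mono[OF C_hom_pt[OF \<psi>]] conv_lim_closed[OF lim' lat_filter_circ[OF L' F]]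
      C_hom_closed[OF \<phi>_hom] by fastforce
  with I \<psi> \<open>lim (circ fr II JJ L lim I) \<in> carrier L\<close>
  show "pt_conv fr II JJ L lim I (pt_map fr II JJ L lim L' lim' \<phi> \<psi>)"
    by (simp add: pt_conv_def mem_bullet_iff pt_map_def pt_comp_mem)
qed

end

section \<open>The universal property of the counit\<close>

definition pt_transpose :: "('a, 'c) gorder_scheme \<Rightarrow> 'x set \<Rightarrow> ('a \<Rightarrow> 'x set) \<Rightarrow> 'x \<Rightarrow> 'a \<Rightarrow> unit set"
  where "pt_transpose L X \<phi> = (\<lambda>x\<in>X. \<lambda>l\<in>carrier L. {_. x \<in> \<phi> l})"

context
  fixes fr :: bool and II :: "'i set set" and JJ :: "'j set set"
    and L :: "'a gorder" and lim and X :: "'x set" and cvX and \<phi>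
  assumes L: "complete_lattice L" and lim: "conv_lim L lim" and X: "conv_space X cvX"
    and \<phi>: "Cconv_hom fr II JJ L lim (PowL X) (pow_lim X cvX) \<phi>"
begin

lemma pt_transpose_mem_pt:
  assumes x: "x \<in> X"
  shows "pt_transpose L X \<phi> x \<in> pt fr II JJ L lim"
  unfolding mem_pt_iff
proof (intro conjI allI impI)
  have "\<phi> \<in> carrier L \<rightarrow>\<^sub>E Pow X"
    using C_hom_funcset[OF Cconv_hom_C_hom[OF \<phi>]] by simp
  then have "C_hom_bool fr II JJ L (\<lambda>l. x \<in> \<phi> l)"
    using Cconv_hom_C_hom[OF \<phi>] x by (simp add: C_hom_PowL_pointwise[OF L])
  then show "C_hom fr II JJ L (PowL UNIV) (pt_transpose L X \<phi> x)"
    unfolding pt_transpose_def restrict_apply'[OF x] by (rule C_hom_PowL_UNIV_restrict_iff[OF L, THEN iffD2])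
  fix F :: "unit set set" assume F: "set_filter UNIV F"
  txt \<open>The image of F under the point x refines the principal filter of x, so it converges to x.\<close>
  define G where "G = img_filter UNIV X (\<lambda>_. x) F"
  have G: "set_filter X G"
    unfolding G_def using F x by (intro set_filter_img_filter) auto
  have "UNIV \<in> F"
    using lat_filter_top[OF complete_lattice_PowL F] by (simp add: Inf_PowL)
  then have "{S. S \<subseteq> X \<and> x \<in> S} \<subseteq> G"
    by (auto simp: G_def img_filter_def)
  then have "cvX G x"
    using conv_space_mono[OF X conv_space_principal[OF X x] G] by blast
  then have "x \<in> \<phi> (lim {l \<in> carrier L. \<phi> l \<in> G})"
    using Cconv_hom_lim[OF \<phi> G] x by (auto simp: pow_lim_def)
  moreover have "{l \<in> carrier L. \<phi> l \<in> G} = {l \<in> carrier L. pt_transpose L X \<phi> x l \<in> F}"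
    using x C_hom_closed[OF Cconv_hom_C_hom[OF \<phi>]] by (auto simp: G_def img_filter_def pt_transpose_def)
  moreover have "lat_filter L {l \<in> carrier L. \<phi> l \<in> G}"
    by (rule lat_filter_vimage[OF L complete_lattice_PowL Cconv_hom_C_hom[OF \<phi>] G])
  ultimately show "() \<in> pt_transpose L X \<phi> x (lim {l \<in> carrier L. pt_transpose L X \<phi> x l \<in> F})"
    using x conv_lim_closed[OF lim] by (auto simp: pt_transpose_def)
qed

lemma pt_transpose_mem_bullet_iff:
  assumes "x \<in> X" "l \<in> carrier L"
  shows "pt_transpose L X \<phi> x \<in> bullet fr II JJ L lim l \<longleftrightarrow> x \<in> \<phi> l"
  using assms pt_transpose_mem_pt by (simp add: mem_bullet_iff pt_transpose_def)

lemma pow_map_pt_transpose_counit: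
  assumes "l \<in> carrier L"
  shows "pow_map X (pt fr II JJ L lim) (pt_transpose L X \<phi>) (counit fr II JJ L lim l) = \<phi> l"
  using assms pt_transpose_mem_bullet_iff C_hom_closed[OF Cconv_hom_C_hom[OF \<phi>]]
  by (auto simp: pow_map_def counit_def bullet_def)

lemma pt_transpose_funcset: "pt_transpose L X \<phi> \<in> X \<rightarrow>\<^sub>E pt fr II JJ L lim"
  using pt_transpose_mem_pt by (simp add: pt_transpose_def)

lemma continuous_pt_transpose:
  "continuous_conv X cvX (pt fr II JJ L lim) (pt_conv fr II JJ L lim) (pt_transpose L X \<phi>)"
  unfolding continuous_conv_def
proof (intro conjI allI impI pt_transpose_funcset)
  fix F x assume cv: "cvX F x"
  then have F: "set_filter X F" and x: "x \<in> X"
    by (auto intro: conv_space_filter[OF X] conv_space_point[OF X])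
  define I where "I = img_filter X (pt fr II JJ L lim) (pt_transpose L X \<phi>) F"
  have I: "set_filter (pt fr II JJ L lim) I"
    unfolding I_def using pt_transpose_funcset F by (intro set_filter_img_filter) auto
  have "circ fr II JJ L lim I = {l \<in> carrier L. \<phi> l \<in> F}"
    using pow_map_pt_transpose_counit
    by (auto simp: I_def circ_def img_filter_def bullet_def pow_map_def counit_def)
  moreover have "x \<in> \<phi> (lim {l \<in> carrier L. \<phi> l \<in> F})"
    using Cconv_hom_lim[OF \<phi> F] cv x by (auto simp: pow_lim_def)
  ultimately have "pt_transpose L X \<phi> x \<in> bullet fr II JJ L lim (lim (circ fr II JJ L lim I))"
    using pt_transpose_mem_bullet_iff[OF x] conv_lim_closed[OF lim lat_filter_circ[OF L I]] by simp
  with I show "pt_conv fr II JJ L lim I (pt_transpose L X \<phi> x)"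
    by (simp add: pt_conv_def)
qed

lemma pt_transpose_unique:
  assumes g: "continuous_conv X cvX (pt fr II JJ L lim) (pt_conv fr II JJ L lim) g"
    and factor: "\<forall>l\<in>carrier L. \<phi> l = pow_map X (pt fr II JJ L lim) g (counit fr II JJ L lim l)"
  shows "g = pt_transpose L X \<phi>"
proof (rule PiE_ext[OF _ pt_transpose_funcset])
  show g_funcset: "g \<in> X \<rightarrow>\<^sub>E pt fr II JJ L lim"
    using g by (simp add: continuous_conv_def)
  fix x assume x: "x \<in> X"
  with g_funcset have gx: "g x \<in> pt fr II JJ L lim"
    by auto
  from C_hom_funcset[OF C_hom_pt[OF gx]] x show "g x = pt_transpose L X \<phi> x"
  proof (intro PiE_ext)
    fix l assume l: "l \<in> carrier L"
    have "pow_map X (pt fr II JJ L lim) g (counit fr II JJ L lim l) = {x \<in> X. g x \<in> bullet fr II JJ L lim l}"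
      using l by (auto simp: pow_map_def counit_def bullet_def)
    with factor l x have "g x \<in> bullet fr II JJ L lim l \<longleftrightarrow> x \<in> \<phi> l"
      by simp
    then have "() \<in> g x l \<longleftrightarrow> x \<in> \<phi> l"
      using gx by (simp add: mem_bullet_iff)
    then show "g x l = pt_transpose L X \<phi> x l"
      using x l by (auto simp: pt_transpose_def)
  qed (auto simp: pt_transpose_def)
qed

lemma ex1_factor_through_counit:
  "\<exists>!f. continuous_conv X cvX (pt fr II JJ L lim) (pt_conv fr II JJ L lim) f \<and>
    (\<forall>l\<in>carrier L. \<phi> l = pow_map X (pt fr II JJ L lim) f (counit fr II JJ L lim l))"
proof (rule ex1I[of _ "pt_transpose L X \<phi>"])
  show "continuous_conv X cvX (pt fr II JJ L lim) (pt_conv fr II JJ L lim) (pt_transpose L X \<phi>) \<and>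
    (\<forall>l\<in>carrier L. \<phi> l = pow_map X (pt fr II JJ L lim) (pt_transpose L X \<phi>) (counit fr II JJ L lim l))"
    using continuous_pt_transpose pow_map_pt_transpose_counit by simp
qed (use pt_transpose_unique in blast)

end

theorem mainTheorem2:
  fixes fr :: bool and II :: "'i set set" and JJ :: "'j set set"
  shows
  "\<comment> \<open>P is a functor Conv \<rightarrow> (C^conv)^op\<close>
   (\<forall>(X :: 'x set) cvX. conv_space X cvX \<longrightarrow>
      C_obj fr (PowL X) \<and> conv_lim (PowL X) (pow_lim X cvX)) \<and>
   (\<forall>(X :: 'x set) cvX (Y :: 'y set) cvY f. conv_space X cvX \<and> conv_space Y cvY \<and>
      continuous_conv X cvX Y cvY f \<longrightarrow>
      Cconv_hom fr II JJ (PowL Y) (pow_lim Y cvY) (PowL X) (pow_lim X cvX) (pow_map X Y f)) \<and>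
   \<comment> \<open>P is fully faithful\<close>
   (\<forall>(X :: 'x set) cvX (Y :: 'y set) cvY. conv_space X cvX \<and> conv_space Y cvY \<longrightarrow>
      bij_betw (pow_map X Y) {f. continuous_conv X cvX Y cvY f}
        {\<phi>. Cconv_hom fr II JJ (PowL Y) (pow_lim Y cvY) (PowL X) (pow_lim X cvX) \<phi>}) \<and>
   \<comment> \<open>pt is a functor (C^conv)^op \<rightarrow> Conv\<close>
   (\<forall>(L :: 'a gorder) lim. C_obj fr L \<and> conv_lim L lim \<longrightarrow>
      conv_space (pt fr II JJ L lim) (pt_conv fr II JJ L lim)) \<and>
   (\<forall>(L :: 'a gorder) lim (L' :: 'b gorder) lim' \<phi>.
      C_obj fr L \<and> conv_lim L lim \<and> C_obj fr L' \<and> conv_lim L' lim' \<and>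
      Cconv_hom fr II JJ L lim L' lim' \<phi> \<longrightarrow>
      continuous_conv (pt fr II JJ L' lim') (pt_conv fr II JJ L' lim') (pt fr II JJ L lim) (pt_conv fr II JJ L lim)
        (pt_map fr II JJ L lim L' lim' \<phi>) \<and>
      \<comment> \<open>naturality of the counit\<close>
      (\<forall>l\<in>carrier L. pow_map (pt fr II JJ L' lim') (pt fr II JJ L lim) (pt_map fr II JJ L lim L' lim' \<phi>)
          (counit fr II JJ L lim l) = counit fr II JJ L' lim' (\<phi> l))) \<and>
   \<comment> \<open>pt is right adjoint to P, with counit l \<mapsto> l-bullet\<close>
   (\<forall>(L :: 'a gorder) lim. C_obj fr L \<and> conv_lim L lim \<longrightarrow>
      Cconv_hom fr II JJ L lim (PowL (pt fr II JJ L lim)) (pow_lim (pt fr II JJ L lim) (pt_conv fr II JJ L lim))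
        (counit fr II JJ L lim) \<and>
      (\<forall>(X :: 'x set) cvX \<phi>. conv_space X cvX \<and>
         Cconv_hom fr II JJ L lim (PowL X) (pow_lim X cvX) \<phi> \<longrightarrow>
         (\<exists>!f. continuous_conv X cvX (pt fr II JJ L lim) (pt_conv fr II JJ L lim) f \<and>
               (\<forall>l\<in>carrier L. \<phi> l = pow_map X (pt fr II JJ L lim) f (counit fr II JJ L lim l)))))"
  by (intro conjI allI impI; (elim conjE)?)
    (simp_all add: complete_lattice_if_C_obj C_obj_PowL conv_lim_pow_lim Cconv_hom_pow_map bij_betw_pow_map
      conv_space_pt continuous_pt_map pow_map_pt_map_counit Cconv_hom_counit ex1_factor_through_counit)

end
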